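(* Let $M,K,N\ge 1$ be integers, let $\mathcal{S}\subseteq\{1,\dots,M\}$ be a fixed nonempty set of participating devices, and let $\sigma_h^2>0$, $\sigma_z^2>0$, $\bar\beta>0$, $p>0$ and $\beta_m>0$ ($m\in\mathcal{S}$) be constants. Assume all devices have the same data fraction $p_m=p$, and for $m\in\mathcal{S}$ let $C_m=p\,c_m$ where $c_m$ is a (possibly random) positive integer; set $C=\sum_{m\in\mathcal{S}}C_m$. Let $h_{m,k}^n=\sqrt{\beta_m}\,g_{m,k}^n$ for $m\in\mathcal{S}$, $k\in\{1,\dots,K\}$, $n\in\{1,\dots,N\}$, where the $g_{m,k}^n$ are i.i.d. $\mathcal{CN}(0,\sigma_h^2)$, and let $z_k^n$ ($k\in\{1,\dots,K\}$, $n\in\{1,\dots,N\}$) be i.i.d. circularly symmetric complex Gaussian $\mathcal{CN}(0,\sigma_z^2)$; assume the families $\{g_{m,k}^n\}$, $\{z_k^n\}$ and $\{c_m\}$ are mutually independent. Define the noise term $$y^{n,noise}=\frac{1}{K}\sum_{m\in\mathcal{S}}\sum_{k=1}^{K}\big(h_{m,k}^n\big)^{*}z_k^n,$$ and for $n\in\{1,\dots,N\}$ set $\Delta\hat\theta_{PS,3}^{n}=\frac{1}{C\sigma_h^2\bar\beta}\operatorname{Re}\{y^{n,noise}\}$ and $\Delta\hat\theta_{PS,3}^{n+N}=\frac{1}{C\sigma_h^2\bar\beta}\operatorname{Im}\{y^{n,noise}\}$. Then $$\sum_{n=1}^{2N}\mathbb{E}\Big[\big(\Delta\hat\theta_{P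S,3}^{n}\big)^2\Big]\le\frac{\sigma_z^2N}{p^2K\sigma_h^2}\sum_{m\in\mathcal{S}}\frac{\beta_m}{\bar\beta^2}.$$
   Context: Setting: over-the-air federated learning with $M$ single-antenna energy-harvesting devices and a parameter server (PS) with $K$ antennas receiving $N$ complex symbols (representing $2N$ real model coordinates). $\mathcal{S}$ is the set of devices participating in the current global iteration; $p_m$ is the fraction of the total data held by device $m$ and $c_m$ is its cooldown multiplier (number of iterations since its previous energy arrival), with $C_m=p_mc_m$ its aggregation weight. $\beta_m$ is the large-scale fading coefficient of device $m$, $z_k^n$ is the receiver noise at antenna $k$, and $\bar\beta>0$ is a fixed normalization constant used by the PS. $^{*}$ denotes complex conjugation. *)

theory Defs
  imports "HOL-Probability.Probability"
begin

text \<open>Circularly symmetric complex Gaussian CN(0, s2): real and imaginary parts are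
  independent real Gaussians with mean 0 and variance s2/2.\<close>
definition complex_normal :: "'a measure \<Rightarrow> ('a \<Rightarrow> complex) \<Rightarrow> real \<Rightarrow> bool" where
  "complex_normal \<Omega> X s2 \<longleftrightarrow>
     X \<in> borel_measurable \<Omega> \<and>
     distributed \<Omega> lborel (\<lambda>\<omega>. Re (X \<omega>)) (normal_density 0 (sqrt (s2 / 2))) \<and>
     distributed \<Omega> lborel (\<lambda>\<omega>. Im (X \<omega>)) (normal_density 0 (sqrt (s2 / 2))) \<and>
     prob_space.indep_var \<Omega> borel (\<lambda>\<omega>. Re (X \<omega>)) borel (\<lambda>\<omega>. Im (X \<omega>))"

text \<open>Index for the independent components: each channel coefficient g_{m,k}^n,
  each noise sample z_k^n, and the whole cooldown family {c_m} as one block.\<close>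
datatype rv_index = Gidx nat nat nat | Zidx nat nat | Cfam

definition rv_sigma ::
  "'a measure \<Rightarrow> nat set \<Rightarrow> (nat \<Rightarrow> nat \<Rightarrow> nat \<Rightarrow> 'a \<Rightarrow> complex) \<Rightarrow>
   (nat \<Rightarrow> nat \<Rightarrow> 'a \<Rightarrow> complex) \<Rightarrow> (nat \<Rightarrow> 'a \<Rightarrow> nat) \<Rightarrow> rv_index \<Rightarrow> 'a set set" where
  "rv_sigma \<Omega> S g z c i = (case i of
      Gidx m k n \<Rightarrow> {g m k n -` A \<inter> space \<Omega> | A. A \<in> sets borel}
    | Zidx k n \<Rightarrow> {z k n -` A \<inter> space \<Omega> | A. A \<in> sets borel}
    | Cfam \<Rightarrow> sigma_sets (space \<Omega>)
               (\<Union>m\<in>S. {c m -` A \<inter> space \<Omega> | A. A \<in> sets (count_space (UNIV :: nat set))}))"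

definition rv_indices :: "nat set \<Rightarrow> nat \<Rightarrow> nat \<Rightarrow> rv_index set" where
  "rv_indices S K N =
     {Gidx m k n | m k n. m \<in> S \<and> k \<in> {1..K} \<and> n \<in> {1..N}} \<union>
     {Zidx k n | k n. k \<in> {1..K} \<and> n \<in> {1..N}} \<union> {Cfam}"

definition y_noise ::
  "nat set \<Rightarrow> nat \<Rightarrow> (nat \<Rightarrow> real) \<Rightarrow> (nat \<Rightarrow> nat \<Rightarrow> nat \<Rightarrow> 'a \<Rightarrow> complex) \<Rightarrow>
   (nat \<Rightarrow> nat \<Rightarrow> 'a \<Rightarrow> complex) \<Rightarrow> nat \<Rightarrow> 'a \<Rightarrow> complex" where
  "y_noise S K \<beta> g z n \<omega> =
     (1 / of_nat K) * (\<Sum>m\<in>S. \<Sum>k\<in>{1..K}.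
        cnj (complex_of_real (sqrt (\<beta> m)) * g m k n \<omega>) * z k n \<omega>)"

definition C_tot :: "nat set \<Rightarrow> real \<Rightarrow> (nat \<Rightarrow> 'a \<Rightarrow> nat) \<Rightarrow> 'a \<Rightarrow> real" where
  "C_tot S p c \<omega> = (\<Sum>m\<in>S. p * real (c m \<omega>))"

definition dtheta3 ::
  "nat set \<Rightarrow> nat \<Rightarrow> nat \<Rightarrow> real \<Rightarrow> real \<Rightarrow> real \<Rightarrow> (nat \<Rightarrow> real) \<Rightarrow> (nat \<Rightarrow> 'a \<Rightarrow> nat) \<Rightarrow>
   (nat \<Rightarrow> nat \<Rightarrow> nat \<Rightarrow> 'a \<Rightarrow> complex) \<Rightarrow> (nat \<Rightarrow> nat \<Rightarrow> 'a \<Rightarrow> complex) \<Rightarrow> nat \<Rightarrow> 'a \<Rightarrow> real" where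
  "dtheta3 S K N sh2 bbar p \<beta> c g z n \<omega> =
     (if n \<le> N then Re (y_noise S K \<beta> g z n \<omega>)
      else Im (y_noise S K \<beta> g z (n - N) \<omega>)) / (C_tot S p c \<omega> * sh2 * bbar)"

end

(*
  The noise y^n = (1/K) sum_{m,k} conj(h_{m,k}^n) z_k^n is a sum of terms
  W_{m,k} = sqrt(beta_m) conj(g_{m,k}^n) z_k^n that are orthogonal in L^2: for two
  different pairs (m,k), (m',k') the product W_{m,k} conj(W_{m',k'}) contains a
  zero-mean factor (z_k if k <> k', otherwise g_{m,k}) exactly once, independent of
  the other factors. Hence E|y^n|^2 = (1/K^2) sum_{m,k} beta_m sigma_h^2 sigma_z^2
  = sigma_h^2 sigma_z^2 (sum_m beta_m) / K. Since every c_m >= 1, the random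
  normalisation C sigma_h^2 bbar is at least p sigma_h^2 bbar, and the coordinates n and
  n+N together contribute Re^2 + Im^2 = |y^n|^2.
*)
theory Submission
  imports Defs
begin

lemma (in prob_space) indep_vars_compose_integral_prod:
  fixes f :: "'i \<Rightarrow> 'b \<Rightarrow> 'c::{real_normed_field, banach, second_countable_topology}"
  assumes indep: "indep_vars N X I" and "finite F" "F \<subseteq> I"
    and meas: "\<And>i. i \<in> F \<Longrightarrow> f i \<in> borel_measurable (N i)"
    and int: "\<And>i. i \<in> F \<Longrightarrow> integrable M (\<lambda>\<omega>. f i (X i \<omega>))"
  shows "integrable M (\<lambda>\<omega>. \<Prod>i\<in>F. f i (X i \<omega>))"
    and "expectation (\<lambda>\<omega>. \<Prod>i\<in>F. f i (X i \<omega>)) = (\<Prod>i\<in>F. expectation (\<lambda>\<omega>. f i (X i \<omega>)))"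
proof -
  have "indep_vars (\<lambda>_. borel) (\<lambda>i \<omega>. f i (X i \<omega>)) F"
    using indep_vars_subset[OF indep \<open>F \<subseteq> I\<close>] meas by (rule indep_vars_compose2)
  then show "integrable M (\<lambda>\<omega>. \<Prod>i\<in>F. f i (X i \<omega>))"
    and "expectation (\<lambda>\<omega>. \<Prod>i\<in>F. f i (X i \<omega>)) = (\<Prod>i\<in>F. expectation (\<lambda>\<omega>. f i (X i \<omega>)))"
    using \<open>finite F\<close> int by (auto intro: indep_vars_integrable indep_vars_lebesgue_integral)
qed

lemma (in prob_space) indep_vars_cross_moment:
  fixes X :: "'i \<Rightarrow> 'a \<Rightarrow> complex"
  assumes indep: "indep_vars (\<lambda>_. borel) X I"
    and int: "\<And>i. i \<in> I \<Longrightarrow> integrable M (X i)"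
    and mean: "\<And>i. i \<in> I \<Longrightarrow> expectation (X i) = 0"
    and int_sq: "\<And>i. i \<in> I \<Longrightarrow> integrable M (\<lambda>\<omega>. X i \<omega> * cnj (X i \<omega>))"
    and var: "\<And>i. i \<in> I \<Longrightarrow> expectation (\<lambda>\<omega>. X i \<omega> * cnj (X i \<omega>)) = of_real (v i)"
    and I: "a \<in> I" "b \<in> I" "c \<in> I" "d \<in> I"
    and distinct: "a \<noteq> b" "a \<noteq> d" "c \<noteq> b" "c \<noteq> d"
  shows "integrable M (\<lambda>\<omega>. cnj (X a \<omega>) * X b \<omega> * cnj (cnj (X c \<omega>) * X d \<omega>))"
    and "expectation (\<lambda>\<omega>. cnj (X a \<omega>) * X b \<omega> * cnj (cnj (X c \<omega>) * X d \<omega>))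
           = (if a = c \<and> b = d then of_real (v a * v b) else 0)"
proof -
  \<comment> \<open>f i collects the factors of the integrand that involve X i, so the integrand
      factors over the distinct indices among a, b, c, d.\<close>
  define f where "f i x = (if i = a then cnj x else 1) * (if i = c then x else 1)
      * (if i = b then x else 1) * (if i = d then cnj x else 1)" for i and x :: complex
  have prod_eq: "(\<Prod>i\<in>{a, b, c, d}. f i (X i \<omega>)) = cnj (X a \<omega>) * X b \<omega> * cnj (cnj (X c \<omega>) * X d \<omega>)"
    for \<omega> using distinct by (cases "a = c"; cases "b = d") (auto simp: f_def ac_simps insert_absorb)
  have f_meas: "f i \<in> borel_measurable borel" for i
    by (cases "i = a"; cases "i = b"; cases "i = c"; cases "i = d")
       (simp_all add: f_def borel_measurable_continuous_onI continuous_intros)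
  have f_int: "integrable M (\<lambda>\<omega>. f i (X i \<omega>))" if "i \<in> {a, b, c, d}" for i
    using that distinct I int int_sq
    by (cases "a = c"; cases "b = d") (auto simp: f_def mult.commute)
  have "finite {a, b, c, d}" "{a, b, c, d} \<subseteq> I" using I by auto
  note factorize = indep_vars_compose_integral_prod[OF indep this f_meas f_int]
  show "integrable M (\<lambda>\<omega>. cnj (X a \<omega>) * X b \<omega> * cnj (cnj (X c \<omega>) * X d \<omega>))"
    using factorize(1) I unfolding prod_eq by auto
  have "(\<Prod>i\<in>{a, b, c, d}. expectation (\<lambda>\<omega>. f i (X i \<omega>)))
      = (if a = c \<and> b = d then of_real (v a * v b) else 0)"
    using distinct I mean var
    by (cases "a = c"; cases "b = d") (auto simp: f_def mult.commute insert_absorb)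
  then show "expectation (\<lambda>\<omega>. cnj (X a \<omega>) * X b \<omega> * cnj (cnj (X c \<omega>) * X d \<omega>))
           = (if a = c \<and> b = d then of_real (v a * v b) else 0)"
    using factorize(2) I unfolding prod_eq by auto
qed

lemma (in prob_space) integral_sum_mult_cnj_orthogonal:
  fixes W :: "'j \<Rightarrow> 'a \<Rightarrow> complex"
  assumes "finite J"
    and int: "\<And>i j. i \<in> J \<Longrightarrow> j \<in> J \<Longrightarrow> integrable M (\<lambda>\<omega>. W i \<omega> * cnj (W j \<omega>))"
    and orth: "\<And>i j. i \<in> J \<Longrightarrow> j \<in> J \<Longrightarrow>
       expectation (\<lambda>\<omega>. W i \<omega> * cnj (W j \<omega>)) = (if i = j then of_real (e i) else 0)"
  shows "integrable M (\<lambda>\<omega>. (\<Sum>j\<in>J. W j \<omega>) * cnj (\<Sum>j\<in>J. W j \<omega>))"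
    and "expectation (\<lambda>\<omega>. (\<Sum>j\<in>J. W j \<omega>) * cnj (\<Sum>j\<in>J. W j \<omega>)) = of_real (\<Sum>j\<in>J. e j)"
proof -
  have expand: "(\<lambda>\<omega>. (\<Sum>j\<in>J. W j \<omega>) * cnj (\<Sum>j\<in>J. W j \<omega>))
      = (\<lambda>\<omega>. \<Sum>i\<in>J. \<Sum>j\<in>J. W i \<omega> * cnj (W j \<omega>))"
    by (simp add: sum_product)
  show "integrable M (\<lambda>\<omega>. (\<Sum>j\<in>J. W j \<omega>) * cnj (\<Sum>j\<in>J. W j \<omega>))"
    unfolding expand by (intro Bochner_Integration.integrable_sum int)
  have "expectation (\<lambda>\<omega>. \<Sum>i\<in>J. \<Sum>j\<in>J. W i \<omega> * cnj (W j \<omega>))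
      = (\<Sum>i\<in>J. \<Sum>j\<in>J. expectation (\<lambda>\<omega>. W i \<omega> * cnj (W j \<omega>)))"
    by (simp add: Bochner_Integration.integrable_sum int)
  also have "\<dots> = (\<Sum>i\<in>J. \<Sum>j\<in>J. if i = j then of_real (e i) else 0)"
    by (intro sum.cong refl) (simp add: orth)
  also have "\<dots> = of_real (\<Sum>j\<in>J. e j)"
    using \<open>finite J\<close> by simp
  finally show "expectation (\<lambda>\<omega>. (\<Sum>j\<in>J. W j \<omega>) * cnj (\<Sum>j\<in>J. W j \<omega>)) = of_real (\<Sum>j\<in>J. e j)"
    unfolding expand .
qed

lemma (in prob_space) normal_distributed_moments:
  fixes Y :: "'a \<Rightarrow> real"
  assumes s: "0 < s" and D: "distributed M lborel Y (normal_density 0 s)"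
  shows "integrable M Y" "expectation Y = 0" "integrable M (\<lambda>x. (Y x)\<^sup>2)"
    "expectation (\<lambda>x. (Y x)\<^sup>2) = s\<^sup>2"
proof -
  show "integrable M Y"
    by (rule distributed_integrable_var[OF D]) (use integrable_normal_moment_nz_1[OF s] in auto)
  show mean: "expectation Y = 0" by (rule normal_distributed_expectation[OF s D])
  have "integrable lborel (\<lambda>x. normal_density 0 s x * (x - 0)^2)"
    using integrable_normal_moment[OF s] by blast
  then show "integrable M (\<lambda>x. (Y x)\<^sup>2)"
    using distributed_integrable[OF D, of "\<lambda>x. x\<^sup>2"] by simp
  show "expectation (\<lambda>x. (Y x)\<^sup>2) = s\<^sup>2"
    using normal_distributed_variance[OF s D] mean by simp
qed

lemma (in prob_space) complex_normal_moments:
  assumes normal: "complex_normal M X v" and v: "0 < v"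
  shows "integrable M X" "expectation X = 0" "integrable M (\<lambda>\<omega>. X \<omega> * cnj (X \<omega>))"
    "expectation (\<lambda>\<omega>. X \<omega> * cnj (X \<omega>)) = of_real v"
proof -
  let ?s = "sqrt (v / 2)"
  have s: "0 < ?s" using v by simp
  have "distributed M lborel (\<lambda>\<omega>. Re (X \<omega>)) (normal_density 0 ?s)"
    and "distributed M lborel (\<lambda>\<omega>. Im (X \<omega>)) (normal_density 0 ?s)"
    using normal unfolding complex_normal_def by auto
  note Re = normal_distributed_moments[OF s this(1)] and Im = normal_distributed_moments[OF s this(2)]
  have X_eq: "X = (\<lambda>\<omega>. of_real (Re (X \<omega>)) + \<i> * of_real (Im (X \<omega>)))"
    by (simp add: fun_eq_iff complex_eq_iff)
  show "integrable M X"
    by (subst X_eq) (simp add: Re(1) Im(1))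
  show "expectation X = 0"
    by (subst X_eq) (simp add: Re(1,2) Im(1,2))
  have sq_eq: "(\<lambda>\<omega>. X \<omega> * cnj (X \<omega>)) = (\<lambda>\<omega>. of_real ((Re (X \<omega>))\<^sup>2 + (Im (X \<omega>))\<^sup>2))"
    by (simp add: complex_mult_cnj)
  show "integrable M (\<lambda>\<omega>. X \<omega> * cnj (X \<omega>))"
    unfolding sq_eq by (intro integrable_of_real Bochner_Integration.integrable_add Re(3) Im(3))
  have "expectation (\<lambda>\<omega>. (Re (X \<omega>))\<^sup>2 + (Im (X \<omega>))\<^sup>2) = v"
    using Re(3,4) Im(3,4) v by simp
  then show "expectation (\<lambda>\<omega>. X \<omega> * cnj (X \<omega>)) = of_real v"
    unfolding sq_eq integral_complex_of_real by simp
qed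

lemma (in prob_space) expectation_Re_sq_add_Im_sq:
  fixes Y :: "'a \<Rightarrow> complex"
  assumes meas: "Y \<in> borel_measurable M" and int: "integrable M (\<lambda>\<omega>. (cmod (Y \<omega>))\<^sup>2)"
  shows "integrable M (\<lambda>\<omega>. (Re (Y \<omega>))\<^sup>2)" "integrable M (\<lambda>\<omega>. (Im (Y \<omega>))\<^sup>2)"
    and "expectation (\<lambda>\<omega>. (Re (Y \<omega>))\<^sup>2) + expectation (\<lambda>\<omega>. (Im (Y \<omega>))\<^sup>2)
           = expectation (\<lambda>\<omega>. (cmod (Y \<omega>))\<^sup>2)"
proof -
  show Re: "integrable M (\<lambda>\<omega>. (Re (Y \<omega>))\<^sup>2)" and Im: "integrable M (\<lambda>\<omega>. (Im (Y \<omega>))\<^sup>2)"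
    by (intro Bochner_Integration.integrable_bound[OF int]; use meas in \<open>simp add: cmod_power2\<close>)+
  show "expectation (\<lambda>\<omega>. (Re (Y \<omega>))\<^sup>2) + expectation (\<lambda>\<omega>. (Im (Y \<omega>))\<^sup>2)
      = expectation (\<lambda>\<omega>. (cmod (Y \<omega>))\<^sup>2)"
    using Re Im by (simp add: cmod_power2)
qed

(* w need not be measurable: if the left integrand is not integrable, its integral is 0. *)
lemma (in prob_space) expectation_sq_divide_le:
  fixes u w :: "'a \<Rightarrow> real"
  assumes int: "integrable M (\<lambda>\<omega>. (u \<omega>)\<^sup>2)" and "0 < a" and le: "\<And>\<omega>. \<omega> \<in> space M \<Longrightarrow> a \<le> w \<omega>"
  shows "expectation (\<lambda>\<omega>. (u \<omega> / w \<omega>)\<^sup>2) \<le> expectation (\<lambda>\<omega>. (u \<omega>)\<^sup>2) / a\<^sup>2"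
proof -
  have "expectation (\<lambda>\<omega>. (u \<omega> / w \<omega>)\<^sup>2) \<le> expectation (\<lambda>\<omega>. (u \<omega>)\<^sup>2 / a\<^sup>2)"
  proof (rule integral_mono_AE')
    show "AE \<omega> in M. (u \<omega> / w \<omega>)\<^sup>2 \<le> (u \<omega>)\<^sup>2 / a\<^sup>2"
    proof (rule AE_I2)
      fix \<omega> assume "\<omega> \<in> space M"
      then have "a \<le> w \<omega>" by (rule le)
      then show "(u \<omega> / w \<omega>)\<^sup>2 \<le> (u \<omega>)\<^sup>2 / a\<^sup>2"
        unfolding power_divide using \<open>0 < a\<close> by (intro divide_left_mono power_mono mult_pos_pos) auto
    qed
  qed (use int in auto)
  then show ?thesis by simp
qed

lemma sum_atLeastAtMost_1_double:
  fixes f :: "nat \<Rightarrow> 'b::comm_monoid_add"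
  shows "(\<Sum>n\<in>{1..2*N}. f n) = (\<Sum>n\<in>{1..N}. f n + f (n + N))"
proof -
  have "{1..2*N} = {1..N} \<union> {1+N..N+N}" by auto
  then have "(\<Sum>n\<in>{1..2*N}. f n) = (\<Sum>n\<in>{1..N}. f n) + (\<Sum>n\<in>{1+N..N+N}. f n)"
    by (simp add: sum.union_disjoint)
  also have "(\<Sum>n\<in>{1+N..N+N}. f n) = (\<Sum>n\<in>{1..N}. f (n + N))"
    by (rule sum.shift_bounds_cl_nat_ivl)
  finally show ?thesis by (simp add: sum.distrib)
qed

(* The block Cfam of cooldown multipliers carries no complex variable; 0 is a dummy. *)
definition rv_var ::
  "(nat \<Rightarrow> nat \<Rightarrow> nat \<Rightarrow> 'a \<Rightarrow> complex) \<Rightarrow> (nat \<Rightarrow> nat \<Rightarrow> 'a \<Rightarrow> complex) \<Rightarrow> rv_index \<Rightarrow> 'a \<Rightarrow> complex"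
  where "rv_var g z i = (case i of Gidx m k n \<Rightarrow> g m k n | Zidx k n \<Rightarrow> z k n | Cfam \<Rightarrow> (\<lambda>_. 0))"

lemma (in prob_space) indep_vars_rv_var:
  assumes indep: "indep_sets (rv_sigma M S g z c) (rv_indices S K N)"
    and meas: "\<And>i. i \<in> rv_indices S K N - {Cfam} \<Longrightarrow> rv_var g z i \<in> borel_measurable M"
  shows "indep_vars (\<lambda>_. borel) (rv_var g z) (rv_indices S K N - {Cfam})"
  unfolding indep_vars_def2
proof
  show "\<forall>i\<in>rv_indices S K N - {Cfam}. rv_var g z i \<in> borel_measurable M"
    using meas by blast
  have "indep_sets (rv_sigma M S g z c) (rv_indices S K N - {Cfam})"
    by (rule indep_sets_mono_index[OF _ indep]) auto
  moreover have "rv_sigma M S g z c i = {rv_var g z i -` A \<inter> space M |A. A \<in> sets borel}"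
    if "i \<in> rv_indices S K N - {Cfam}" for i
    using that by (cases i) (auto simp: rv_sigma_def rv_var_def)
  ultimately show "indep_sets (\<lambda>i. {rv_var g z i -` A \<inter> space M |A. A \<in> sets borel})
      (rv_indices S K N - {Cfam})"
    using indep_sets_cong by (metis (no_types, lifting))
qed

lemma borel_measurable_y_noise:
  assumes "\<And>m k. m \<in> S \<Longrightarrow> k \<in> {1..K} \<Longrightarrow> g m k n \<in> borel_measurable M"
    and "\<And>k. k \<in> {1..K} \<Longrightarrow> z k n \<in> borel_measurable M"
  shows "y_noise S K \<beta> g z n \<in> borel_measurable M"
proof -
  have "cnj \<in> borel_measurable borel"
    by (intro borel_measurable_continuous_onI continuous_intros)
  note borel_measurable_cnj = measurable_compose[OF _ this]
  show ?thesis
    unfolding y_noise_def[abs_def] using assms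
    by (intro borel_measurable_times borel_measurable_sum borel_measurable_const
        borel_measurable_cnj) auto
qed

lemma (in prob_space) y_noise_second_moment:
  assumes "finite S" and \<beta>: "\<And>m. m \<in> S \<Longrightarrow> 0 \<le> \<beta> m"
    and indep: "indep_vars (\<lambda>_. borel) (rv_var g z) (rv_indices S K N - {Cfam})"
    and g_normal: "\<And>m k n. m \<in> S \<Longrightarrow> k \<in> {1..K} \<Longrightarrow> n \<in> {1..N} \<Longrightarrow> complex_normal M (g m k n) sh2"
    and z_normal: "\<And>k n. k \<in> {1..K} \<Longrightarrow> n \<in> {1..N} \<Longrightarrow> complex_normal M (z k n) sz2"
    and "0 < sh2" "0 < sz2" and n: "n \<in> {1..N}"
  shows "integrable M (\<lambda>\<omega>. (cmod (y_noise S K \<beta> g z n \<omega>))\<^sup>2)"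
    and "expectation (\<lambda>\<omega>. (cmod (y_noise S K \<beta> g z n \<omega>))\<^sup>2) = sh2 * sz2 * (\<Sum>m\<in>S. \<beta> m) / K"
proof -
  define I where "I = rv_indices S K N - {Cfam}"
  define v where "v i = (case i of Gidx _ _ _ \<Rightarrow> sh2 | _ \<Rightarrow> sz2)" for i
  have "complex_normal M (rv_var g z i) (v i)" "0 < v i" if "i \<in> I" for i
    using that g_normal z_normal \<open>0 < sh2\<close> \<open>0 < sz2\<close>
    by (cases i; auto simp: I_def rv_indices_def rv_var_def v_def)+
  note moments = complex_normal_moments[OF this]
  define W where "W j \<omega> = cnj (of_real (sqrt (\<beta> (fst j))) * g (fst j) (snd j) n \<omega>) * z (snd j) n \<omega>"
    for j \<omega>
  define J where "J = S \<times> {1..K}"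
  have orth: "integrable M (\<lambda>\<omega>. W j \<omega> * cnj (W j' \<omega>)) \<and>
      expectation (\<lambda>\<omega>. W j \<omega> * cnj (W j' \<omega>)) = (if j = j' then of_real (\<beta> (fst j) * sh2 * sz2) else 0)"
    if "j \<in> J" "j' \<in> J" for j j'
  proof -
    obtain m k m' k' where jj: "j = (m, k)" "j' = (m', k')" by fastforce
    have "Gidx m k n \<in> I" "Zidx k n \<in> I" "Gidx m' k' n \<in> I" "Zidx k' n \<in> I"
      using that n jj by (auto simp: I_def J_def rv_indices_def)
    note cross = indep_vars_cross_moment[OF indep[folded I_def] moments this]
    have "W j \<omega> * cnj (W j' \<omega>) = of_real (sqrt (\<beta> m) * sqrt (\<beta> m')) *
        (cnj (rv_var g z (Gidx m k n) \<omega>) * rv_var g z (Zidx k n) \<omega> *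
         cnj (cnj (rv_var g z (Gidx m' k' n) \<omega>) * rv_var g z (Zidx k' n) \<omega>))" for \<omega>
      by (simp add: W_def rv_var_def jj)
    moreover have "sqrt (\<beta> m) * sqrt (\<beta> m) = \<beta> m"
      using that \<beta> jj by (simp add: J_def)
    ultimately show ?thesis
      using cross by (auto simp: jj v_def simp flip: of_real_mult)
  qed
  have "finite J" using \<open>finite S\<close> by (simp add: J_def)
  note sum_W = integral_sum_mult_cnj_orthogonal[OF this conjunct1[OF orth] conjunct2[OF orth]]
  have "y_noise S K \<beta> g z n \<omega> = (1 / of_nat K) * (\<Sum>j\<in>J. W j \<omega>)" for \<omega>
    by (simp add: y_noise_def J_def W_def sum.cartesian_product split_def)
  then have norm_sq: "of_real ((cmod (y_noise S K \<beta> g z n \<omega>))\<^sup>2)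
      = of_real (1 / (real K)\<^sup>2) * ((\<Sum>j\<in>J. W j \<omega>) * cnj (\<Sum>j\<in>J. W j \<omega>))" for \<omega>
    unfolding complex_norm_square by (simp add: power2_eq_square)
  have "integrable M (\<lambda>\<omega>. of_real ((cmod (y_noise S K \<beta> g z n \<omega>))\<^sup>2) :: complex)"
    unfolding norm_sq using sum_W(1) by simp
  then show "integrable M (\<lambda>\<omega>. (cmod (y_noise S K \<beta> g z n \<omega>))\<^sup>2)"
    by (rule complex_of_real_integrable_eq[THEN iffD1])
  have "(\<Sum>j\<in>J. \<beta> (fst j) * sh2 * sz2) = real K * (sh2 * sz2 * (\<Sum>m\<in>S. \<beta> m))"
    by (simp add: J_def sum.cartesian_product' sum_distrib_left mult_ac)
  then have "expectation (\<lambda>\<omega>. (\<Sum>j\<in>J. W j \<omega>) * cnj (\<Sum>j\<in>J. W j \<omega>))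
      = of_real (real K * (sh2 * sz2 * (\<Sum>m\<in>S. \<beta> m)))"
    using sum_W(2) by simp
  then have "of_real (expectation (\<lambda>\<omega>. (cmod (y_noise S K \<beta> g z n \<omega>))\<^sup>2))
      = (of_real (sh2 * sz2 * (\<Sum>m\<in>S. \<beta> m) / K) :: complex)"
    unfolding integral_complex_of_real[symmetric] norm_sq integral_mult_right_zero
    by (simp add: power2_eq_square)
  then show "expectation (\<lambda>\<omega>. (cmod (y_noise S K \<beta> g z n \<omega>))\<^sup>2) = sh2 * sz2 * (\<Sum>m\<in>S. \<beta> m) / K"
    using of_real_eq_iff by blast
qed

lemma C_tot_ge:
  assumes "finite S" "S \<noteq> {}" "0 \<le> p" and c: "\<And>m. m \<in> S \<Longrightarrow> 1 \<le> c m \<omega>"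
  shows "p \<le> C_tot S p c \<omega>"
proof -
  obtain m where m: "m \<in> S" using \<open>S \<noteq> {}\<close> by blast
  have "p * 1 \<le> p * real (c m \<omega>)" using c[OF m] \<open>0 \<le> p\<close> by (intro mult_left_mono) auto
  also have "\<dots> \<le> (\<Sum>m\<in>S. p * real (c m \<omega>))"
    using \<open>finite S\<close> m \<open>0 \<le> p\<close> by (intro member_le_sum) auto
  finally show ?thesis by (simp add: C_tot_def)
qed

lemma (in prob_space) expectation_dtheta3_pair_le:
  assumes "1 \<le> n" "n \<le> N"
    and meas: "y_noise S K \<beta> g z n \<in> borel_measurable M"
    and int: "integrable M (\<lambda>\<omega>. (cmod (y_noise S K \<beta> g z n \<omega>))\<^sup>2)"
    and "0 < a" and C: "\<And>\<omega>. \<omega> \<in> space M \<Longrightarrow> a \<le> C_tot S p c \<omega> * sh2 * bbar"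
  shows "expectation (\<lambda>\<omega>. (dtheta3 S K N sh2 bbar p \<beta> c g z n \<omega>)\<^sup>2)
         + expectation (\<lambda>\<omega>. (dtheta3 S K N sh2 bbar p \<beta> c g z (n + N) \<omega>)\<^sup>2)
         \<le> expectation (\<lambda>\<omega>. (cmod (y_noise S K \<beta> g z n \<omega>))\<^sup>2) / a\<^sup>2"
proof -
  note Re_Im = expectation_Re_sq_add_Im_sq[OF meas int]
  note scale = expectation_sq_divide_le[OF _ \<open>0 < a\<close> C]
  have "expectation (\<lambda>\<omega>. (dtheta3 S K N sh2 bbar p \<beta> c g z n \<omega>)\<^sup>2)
         + expectation (\<lambda>\<omega>. (dtheta3 S K N sh2 bbar p \<beta> c g z (n + N) \<omega>)\<^sup>2)
       \<le> expectation (\<lambda>\<omega>. (Re (y_noise S K \<beta> g z n \<omega>))\<^sup>2) / a\<^sup>2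
         + expectation (\<lambda>\<omega>. (Im (y_noise S K \<beta> g z n \<omega>))\<^sup>2) / a\<^sup>2"
    using scale[OF Re_Im(1)] scale[OF Re_Im(2)] assms(1,2)
    by (intro add_mono) (simp_all add: dtheta3_def)
  also have "\<dots> = expectation (\<lambda>\<omega>. (cmod (y_noise S K \<beta> g z n \<omega>))\<^sup>2) / a\<^sup>2"
    by (simp only: add_divide_distrib[symmetric] Re_Im(3))
  finally show ?thesis .
qed

theorem lemma6:
  fixes \<Omega> :: "'a measure"
    and M K N :: nat and S :: "nat set"
    and sh2 sz2 bbar p :: real and \<beta> :: "nat \<Rightarrow> real"
    and c :: "nat \<Rightarrow> 'a \<Rightarrow> nat"
    and g :: "nat \<Rightarrow> nat \<Rightarrow> nat \<Rightarrow> 'a \<Rightarrow> complex"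
    and z :: "nat \<Rightarrow> nat \<Rightarrow> 'a \<Rightarrow> complex"
  assumes "prob_space \<Omega>"
    and "M \<ge> 1" "K \<ge> 1" "N \<ge> 1"
    and "S \<subseteq> {1..M}" "S \<noteq> {}"
    and "sh2 > 0" "sz2 > 0" "bbar > 0" "p > 0"
    and "\<And>m. m \<in> S \<Longrightarrow> \<beta> m > 0"
    and "\<And>m. m \<in> S \<Longrightarrow> c m \<in> measurable \<Omega> (count_space UNIV)"
    and "\<And>m \<omega>. m \<in> S \<Longrightarrow> \<omega> \<in> space \<Omega> \<Longrightarrow> c m \<omega> \<ge> 1"
    and "\<And>m k n. m \<in> S \<Longrightarrow> k \<in> {1..K} \<Longrightarrow> n \<in> {1..N} \<Longrightarrow> complex_normal \<Omega> (g m k n) sh2"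
    and "\<And>k n. k \<in> {1..K} \<Longrightarrow> n \<in> {1..N} \<Longrightarrow> complex_normal \<Omega> (z k n) sz2"
    and "prob_space.indep_sets \<Omega> (rv_sigma \<Omega> S g z c) (rv_indices S K N)"
  shows "(\<Sum>n\<in>{1..2*N}. prob_space.expectation \<Omega>
            (\<lambda>\<omega>. (dtheta3 S K N sh2 bbar p \<beta> c g z n \<omega>)\<^sup>2))
         \<le> sz2 * real N / (p\<^sup>2 * real K * sh2) * (\<Sum>m\<in>S. \<beta> m / bbar\<^sup>2)"
proof -
  interpret prob_space \<Omega> by fact
  have "finite S" using \<open>S \<subseteq> {1..M}\<close> finite_subset by blast
  have "rv_var g z i \<in> borel_measurable \<Omega>" if "i \<in> rv_indices S K N - {Cfam}" for i
    using that assms(14,15) by (cases i) (auto simp: rv_indices_def rv_var_def complex_normal_def)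
  note indep = indep_vars_rv_var[OF assms(16) this]
  have \<beta>_nonneg: "0 \<le> \<beta> m" if "m \<in> S" for m using assms(11)[OF that] by simp
  have C_ge: "p * sh2 * bbar \<le> C_tot S p c \<omega> * sh2 * bbar" if "\<omega> \<in> space \<Omega>" for \<omega>
    using \<open>p > 0\<close> assms(7,9,13) that
    by (intro mult_right_mono C_tot_ge[OF \<open>finite S\<close> \<open>S \<noteq> {}\<close>]) auto
  let ?E = "\<lambda>n. expectation (\<lambda>\<omega>. (dtheta3 S K N sh2 bbar p \<beta> c g z n \<omega>)\<^sup>2)"
  have "?E n + ?E (n + N) \<le> sh2 * sz2 * (\<Sum>m\<in>S. \<beta> m) / K / (p * sh2 * bbar)\<^sup>2"
    if n: "n \<in> {1..N}" for n
  proof -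
    note moment = y_noise_second_moment[OF \<open>finite S\<close> \<beta>_nonneg indep assms(14,15,7,8) n]
    have "y_noise S K \<beta> g z n \<in> borel_measurable \<Omega>"
      using n assms(14,15) by (intro borel_measurable_y_noise) (auto simp: complex_normal_def)
    from expectation_dtheta3_pair_le[OF _ _ this moment(1) _ C_ge] show ?thesis
      using n moment(2) assms(7,9,10) by simp
  qed
  then have "(\<Sum>n\<in>{1..2*N}. ?E n) \<le> (\<Sum>n\<in>{1..N}. sh2 * sz2 * (\<Sum>m\<in>S. \<beta> m) / K / (p * sh2 * bbar)\<^sup>2)"
    unfolding sum_atLeastAtMost_1_double by (rule sum_mono)
  also have "\<dots> = sz2 * real N / (p\<^sup>2 * real K * sh2) * (\<Sum>m\<in>S. \<beta> m / bbar\<^sup>2)"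
    using assms(7,9,10) by (simp add: sum_divide_distrib[symmetric] power2_eq_square field_simps)
  finally show ?thesis .
qed

end
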